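(* For conjunctive guarded systems of type $(A,B)$ and every LTL formula without the next operator $h(A,B_1)$: for all $n\ge2$, if some unconditionally fair initializing run of $(A,B)^{(1,n)}$ satisfies $h(A,B_1)$, then some unconditionally fair initializing run of $(A,B)^{(1,n+1)}$ satisfies $h(A,B_1)$.
   Context: A process template is $U=(Q_U,\mathit{init}_U,\Sigma_U,\delta_U)$ with finite states $Q_U$, initial state $\mathit{init}_U$, finite input alphabet $\Sigma_U$ and guarded transitions $\delta_U\subseteq Q_U\times\Sigma_U\times 2^{Q_A\cup Q_B}\times Q_U$; templates $A,B$ have disjoint state sets and disjoint alphabets. The system $(A,B)^{(1,n)}$ consists of one copy of $A$ and $n$ copies $B_1,\dots,B_n$ of $B$; a global state $s$ gives each process a local state, a global input $e$ gives each process an input letter, and initially all processes are in their initial states. In a conjunctive system a guard $g$ is satisfied for process $p$ in $s$ iff every process $p'\ne p$ has $s(p')\in g$, and $\mathit{init}_A,\mathit{init}_B$ belong to every guard. A local transition $(q,\sigma,g,q')$ of $p$ is enabled for $(s,e)$ if $s(p)=q$, $e(p)=\sigma$ and $g$ is satisfied for $p$ in $s$; a global step changes the state of exactly one process along an enabled transition. A path is a sequence of configurations $(s_1,e_1,p_1),(s_2,e_2,p_2),\dots$ where $p_t$ makes the step from $s_t$ to $s_{t+1}$ under $e_t$, a configuration $(s,e,\bot)$ occurs (as the last one) exactly when all processes are disabled, and $e_{t+1}(p)=e_t(p)$ for every process $p$ not moving at moment $t$. A run is a maximal path from the initial state. A run is unconditionally fair if it is infinite and every process moves infinitely often; it is initializing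 if every process that moves infinitely often visits its template's initial state infinitely often. $h(A,B_1)$ is an LTL formula without next operator over atomic propositions from $Q_A\cup\Sigma_A$ and $(Q_B\cup\Sigma_B)\times\{1\}$, interpreted on the local states and inputs of $A$ and $B_1$ along the run. *)

theory Defs
  imports Main
begin

text \<open>A template U = (Q_U, init_U, Sigma_U, delta_U). States of both templates live in a
  common type 'q and inputs in a common type 's; disjointness is imposed on the sets.\<close>

record ('q, 's) template =
  tQ     :: "'q set"
  tinit  :: 'q
  tSig   :: "'s set"
  tdelta :: "('q \<times> 's \<times> 'q set \<times> 'q) set"

definition template_wf :: "('q, 's) template \<Rightarrow> 'q set \<Rightarrow> bool" where
  "template_wf U QG \<longleftrightarrow> finite (tQ U) \<and> tinit U \<in> tQ U \<and> finite (tSig U) \<and>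
     tdelta U \<subseteq> tQ U \<times> tSig U \<times> Pow QG \<times> tQ U"

definition conj_templates :: "('q, 's) template \<Rightarrow> ('q, 's) template \<Rightarrow> bool" where
  "conj_templates A B \<longleftrightarrow>
     template_wf A (tQ A \<union> tQ B) \<and> template_wf B (tQ A \<union> tQ B) \<and>
     tQ A \<inter> tQ B = {} \<and> tSig A \<inter> tSig B = {} \<and>
     (\<forall>(q, \<sigma>, g, q') \<in> tdelta A \<union> tdelta B. tinit A \<in> g \<and> tinit B \<in> g)"

text \<open>Processes are numbered 0..n: process 0 is the copy of A, process i (1 \<le> i \<le> n) is B_i.\<close>

definition tmpl :: "('q, 's) template \<Rightarrow> ('q, 's) template \<Rightarrow> nat \<Rightarrow> ('q, 's) template" where
  "tmpl A B p = (if p = 0 then A else B)"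

text \<open>Configuration (s, e, p): global state, global input, process that moves.
  (Only infinite runs matter below, so the deadlock marker \<bottom> never occurs.)\<close>

type_synonym ('q, 's) config = "(nat \<Rightarrow> 'q) \<times> (nat \<Rightarrow> 's) \<times> nat"

definition cst :: "('q, 's) config \<Rightarrow> nat \<Rightarrow> 'q" where "cst c = fst c"
definition cinp :: "('q, 's) config \<Rightarrow> nat \<Rightarrow> 's" where "cinp c = fst (snd c)"
definition cmov :: "('q, 's) config \<Rightarrow> nat" where "cmov c = snd (snd c)"

definition guard_sat :: "nat \<Rightarrow> 'q set \<Rightarrow> (nat \<Rightarrow> 'q) \<Rightarrow> nat \<Rightarrow> bool" where
  "guard_sat n g s p \<longleftrightarrow> (\<forall>p' \<le> n. p' \<noteq> p \<longrightarrow> s p' \<in> g)"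

definition enabled ::
  "('q, 's) template \<Rightarrow> ('q, 's) template \<Rightarrow> nat \<Rightarrow> (nat \<Rightarrow> 'q) \<Rightarrow> (nat \<Rightarrow> 's) \<Rightarrow> nat
    \<Rightarrow> ('q \<times> 's \<times> 'q set \<times> 'q) \<Rightarrow> bool" where
  "enabled A B n s e p tr \<longleftrightarrow> p \<le> n \<and> tr \<in> tdelta (tmpl A B p) \<and>
     (case tr of (q, \<sigma>, g, q') \<Rightarrow> s p = q \<and> e p = \<sigma> \<and> guard_sat n g s p)"

definition gstep ::
  "('q, 's) template \<Rightarrow> ('q, 's) template \<Rightarrow> nat \<Rightarrow> ('q, 's) config \<Rightarrow> ('q, 's) config \<Rightarrow> bool" where
  "gstep A B n c c' \<longleftrightarrow> cmov c \<le> n \<and>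
     (\<exists>g. enabled A B n (cst c) (cinp c) (cmov c)
            (cst c (cmov c), cinp c (cmov c), g, cst c' (cmov c))) \<and>
     (\<forall>p \<le> n. p \<noteq> cmov c \<longrightarrow> cst c' p = cst c p \<and> cinp c' p = cinp c p)"

text \<open>Infinite run of (A,B)^(1,n) (an infinite path from the initial state is maximal).\<close>
definition inf_run ::
  "('q, 's) template \<Rightarrow> ('q, 's) template \<Rightarrow> nat \<Rightarrow> (nat \<Rightarrow> ('q, 's) config) \<Rightarrow> bool" where
  "inf_run A B n \<rho> \<longleftrightarrow>
     (\<forall>p \<le> n. cst (\<rho> 0) p = tinit (tmpl A B p)) \<and>
     (\<forall>t. \<forall>p \<le> n. cinp (\<rho> t) p \<in> tSig (tmpl A B p)) \<and>
     (\<forall>t. gstep A B n (\<rho> t) (\<rho> (Suc t)))"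

definition uncond_fair_run ::
  "('q, 's) template \<Rightarrow> ('q, 's) template \<Rightarrow> nat \<Rightarrow> (nat \<Rightarrow> ('q, 's) config) \<Rightarrow> bool" where
  "uncond_fair_run A B n \<rho> \<longleftrightarrow> inf_run A B n \<rho> \<and>
     (\<forall>p \<le> n. infinite {t. cmov (\<rho> t) = p})"

definition initializing ::
  "('q, 's) template \<Rightarrow> ('q, 's) template \<Rightarrow> nat \<Rightarrow> (nat \<Rightarrow> ('q, 's) config) \<Rightarrow> bool" where
  "initializing A B n \<rho> \<longleftrightarrow>
     (\<forall>p \<le> n. infinite {t. cmov (\<rho> t) = p} \<longrightarrow>
               infinite {t. cst (\<rho> t) p = tinit (tmpl A B p)})"

datatype 'a ltlx =
    LTrue
  | LProp 'a
  | LNot "'a ltlx"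
  | LAnd "'a ltlx" "'a ltlx"
  | LUntil "'a ltlx" "'a ltlx"

fun ltlx_sem :: "(nat \<Rightarrow> 'a set) \<Rightarrow> nat \<Rightarrow> 'a ltlx \<Rightarrow> bool" where
  "ltlx_sem w i LTrue = True"
| "ltlx_sem w i (LProp a) = (a \<in> w i)"
| "ltlx_sem w i (LNot \<phi>) = (\<not> ltlx_sem w i \<phi>)"
| "ltlx_sem w i (LAnd \<phi> \<psi>) = (ltlx_sem w i \<phi> \<and> ltlx_sem w i \<psi>)"
| "ltlx_sem w i (LUntil \<phi> \<psi>) =
     (\<exists>k \<ge> i. ltlx_sem w k \<psi> \<and> (\<forall>j. i \<le> j \<and> j < k \<longrightarrow> ltlx_sem w j \<phi>))"

text \<open>Atomic propositions: Q_A \<union> Sigma_A (about process A) and (Q_B \<union> Sigma_B) \<times> {1} (about B_1).\<close>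
datatype ('q, 's) ap = AState 'q | AInput 's | B1State 'q | B1Input 's

definition ap_ok :: "('q, 's) template \<Rightarrow> ('q, 's) template \<Rightarrow> ('q, 's) ap \<Rightarrow> bool" where
  "ap_ok A B a = (case a of AState q \<Rightarrow> q \<in> tQ A | AInput \<sigma> \<Rightarrow> \<sigma> \<in> tSig A
                   | B1State q \<Rightarrow> q \<in> tQ B | B1Input \<sigma> \<Rightarrow> \<sigma> \<in> tSig B)"

definition run_label :: "(nat \<Rightarrow> ('q, 's) config) \<Rightarrow> nat \<Rightarrow> ('q, 's) ap set" where
  "run_label \<rho> t = {AState (cst (\<rho> t) 0), AInput (cinp (\<rho> t) 0),
                     B1State (cst (\<rho> t) 1), B1Input (cinp (\<rho> t) 1)}"

definition run_sat :: "(nat \<Rightarrow> ('q, 's) config) \<Rightarrow> ('q, 's) ap ltlx \<Rightarrow> bool" where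
  "run_sat \<rho> h \<longleftrightarrow> ltlx_sem (run_label \<rho>) 0 h"

end

theory Submission
  imports Defs "HOL-Library.Infinite_Set" "HOL-Combinatorics.Transposition"
begin

(* The new copy B_(n+1) plays the role of B_2 on alternate stretches of the given run, while
   the copy not in charge idles.  By pigeonhole, B_2 is infinitely often in init_B reading some
   fixed input sigma; parking the idle copy in exactly that local state lets the two copies
   exchange roles at such moments without any visible jump.  An idle copy in init_B satisfies
   every conjunctive guard, so nobody is blocked; exchanging roles only after the copy in charge
   has moved gives both copies infinitely many moves and visits to init_B; and A and B_1 behave
   exactly as before, so h still holds. *)

lemma strict_mono_segment:
  fixes b :: "nat \<Rightarrow> nat"
  assumes "strict_mono b" and "b 0 = 0"
  shows "\<exists>!k. b k \<le> t \<and> t < b (Suc k)"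
proof (rule ex_ex1I)
  show "\<exists>k. b k \<le> t \<and> t < b (Suc k)"
  proof (induction t)
    case 0
    show ?case using assms strict_monoD[OF assms(1), of 0 1] by auto
  next
    case (Suc t)
    then obtain k where k: "b k \<le> t" "t < b (Suc k)" by blast
    show ?case
    proof (cases "Suc t < b (Suc k)")
      case True
      with k show ?thesis by (intro exI[of _ k]) simp
    next
      case False
      with k have "b (Suc k) = Suc t" by simp
      moreover have "b (Suc k) < b (Suc (Suc k))" using strict_monoD[OF assms(1)] by simp
      ultimately show ?thesis by (intro exI[of _ "Suc k"]) simp
    qed
  qed
next
  fix k k'
  assume k: "b k \<le> t \<and> t < b (Suc k)" and k': "b k' \<le> t \<and> t < b (Suc k')"
  have "b (Suc k) \<le> b k'" if "k < k'"
    using that strict_mono_less_eq[OF assms(1)] by (simp add: Suc_le_eq)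
  moreover have "b (Suc k') \<le> b k" if "k' < k"
    using that strict_mono_less_eq[OF assms(1)] by (simp add: Suc_le_eq)
  ultimately show "k = k'"
    using k k' by (meson leD le_less_trans linorder_neqE_nat)
qed

lemma exists_alternating_parity:
  fixes P Q :: "nat \<Rightarrow> bool"
  assumes "infinite {t. P t}" and "infinite {t. Q t}"
  obtains par :: "nat \<Rightarrow> bool"
  where "\<And>t. par (Suc t) \<noteq> par t \<Longrightarrow> Q (Suc t)"
    and "\<And>x. infinite {t. P t \<and> par t = x}"
proof -
  have "\<exists>v. x < v \<and> Q v \<and> (\<exists>u. x \<le> u \<and> u < v \<and> P u)" for x
  proof -
    obtain u where "x \<le> u" "P u"
      using assms(1) by (auto simp: infinite_nat_iff_unbounded_le)
    moreover obtain v where "u < v" "Q v"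
      using assms(2) by (auto simp: infinite_nat_iff_unbounded)
    ultimately show ?thesis by (meson le_less_trans)
  qed
  then obtain nxt where nxt_gt: "\<And>x. x < nxt x" and nxt_Q: "\<And>x. Q (nxt x)"
    and nxt_P: "\<And>x. \<exists>u. x \<le> u \<and> u < nxt x \<and> P u"
    by metis
  \<comment> \<open>Switch at the times \<open>b (Suc k)\<close>; every segment \<open>[b k, b (Suc k))\<close> contains a
    \<open>P\<close>-time, and the parity is that of the segment index.\<close>
  define b where "b k = (nxt ^^ k) 0" for k
  have b_Suc: "b (Suc k) = nxt (b k)" for k
    by (simp add: b_def)
  have mono: "strict_mono b"
    by (simp add: strict_mono_Suc_iff b_Suc nxt_gt)
  have "b 0 = 0"
    by (simp add: b_def)
  define seg where "seg t = (THE k. b k \<le> t \<and> t < b (Suc k))" for t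
  have seg_eq: "seg t = k \<longleftrightarrow> b k \<le> t \<and> t < b (Suc k)" for t k
    using the1_equality[OF strict_mono_segment[OF mono \<open>b 0 = 0\<close>]]
      theI'[OF strict_mono_segment[OF mono \<open>b 0 = 0\<close>]]
    unfolding seg_def by blast
  show ?thesis
  proof
    fix t
    assume "odd (seg (Suc t)) \<noteq> odd (seg t)"
    then have "seg (Suc t) \<noteq> seg t" by auto
    moreover have "b (seg t) \<le> t" "t < b (Suc (seg t))"
      using seg_eq by auto
    ultimately have "Suc t = b (Suc (seg t))"
      using seg_eq by (metis Suc_leI le_SucI le_neq_implies_less)
    then show "Q (Suc t)"
      using nxt_Q b_Suc by simp
  next
    fix x
    show "infinite {t. P t \<and> odd (seg t) = x}"
      unfolding infinite_nat_iff_unbounded_le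
    proof
      fix m :: nat
      define k where "k = 2 * m + of_bool x"
      obtain u where u: "b k \<le> u" "u < b (Suc k)" "P u"
        using nxt_P b_Suc by metis
      have "m \<le> u"
        using strict_mono_imp_increasing[OF mono, of k] u(1) k_def by linarith
      moreover have "seg u = k"
        using seg_eq u(1,2) by blast
      moreover have "odd k = x"
        by (cases x) (simp_all add: k_def)
      ultimately show "\<exists>u\<ge>m. u \<in> {t. P t \<and> odd (seg t) = x}"
        using u(3) by blast
    qed
  qed
qed

definition park_proc :: "nat \<Rightarrow> 'q \<Rightarrow> 's \<Rightarrow> ('q, 's) config \<Rightarrow> ('q, 's) config" where
  "park_proc N q \<sigma> c = ((cst c)(N := q), (cinp c)(N := \<sigma>), cmov c)"

definition swap_procs :: "nat \<Rightarrow> nat \<Rightarrow> ('q, 's) config \<Rightarrow> ('q, 's) config" where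
  "swap_procs i j c =
     (cst c \<circ> transpose i j, cinp c \<circ> transpose i j, transpose i j (cmov c))"

lemma park_proc_simps [simp]:
  "cst (park_proc N q \<sigma> c) = (cst c)(N := q)"
  "cinp (park_proc N q \<sigma> c) = (cinp c)(N := \<sigma>)"
  "cmov (park_proc N q \<sigma> c) = cmov c"
  by (simp_all add: park_proc_def cst_def cinp_def cmov_def)

lemma swap_procs_simps [simp]:
  "cst (swap_procs i j c) = cst c \<circ> transpose i j"
  "cinp (swap_procs i j c) = cinp c \<circ> transpose i j"
  "cmov (swap_procs i j c) = transpose i j (cmov c)"
  by (simp_all add: swap_procs_def cst_def cinp_def cmov_def)

lemma gstep_cong_target:
  assumes "gstep A B n c c'" and "cst d = cst c'" and "cinp d = cinp c'"
  shows "gstep A B n c d"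
  using assms by (simp add: gstep_def)

lemma gstep_swap_procs:
  assumes "gstep A B n c c'" and "i \<le> n" and "j \<le> n" and "tmpl A B i = tmpl A B j"
  shows "gstep A B n (swap_procs i j c) (swap_procs i j c')"
proof -
  let ?\<tau> = "transpose i j"
  have \<tau>_le: "?\<tau> p \<le> n" if "p \<le> n" for p
    using that assms(2,3) by (simp add: transpose_def)
  have \<tau>_tmpl: "tmpl A B (?\<tau> p) = tmpl A B p" for p
    using assms(4) by (simp add: transpose_def)
  have \<tau>_ne: "?\<tau> p \<noteq> q" if "p \<noteq> ?\<tau> q" for p q
    using that by auto
  from assms(1) obtain g where m: "cmov c \<le> n"
    and tr: "(cst c (cmov c), cinp c (cmov c), g, cst c' (cmov c)) \<in> tdelta (tmpl A B (cmov c))"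
    and guard: "guard_sat n g (cst c) (cmov c)"
    and frame: "\<forall>p \<le> n. p \<noteq> cmov c \<longrightarrow> cst c' p = cst c p \<and> cinp c' p = cinp c p"
    unfolding gstep_def enabled_def by auto
  have "guard_sat n g (cst c \<circ> ?\<tau>) (?\<tau> (cmov c))"
    using guard \<tau>_le \<tau>_ne unfolding guard_sat_def by simp
  then have "enabled A B n (cst c \<circ> ?\<tau>) (cinp c \<circ> ?\<tau>) (?\<tau> (cmov c))
               (cst c (cmov c), cinp c (cmov c), g, cst c' (cmov c))"
    using tr \<tau>_le[OF m] \<tau>_tmpl unfolding enabled_def by simp
  moreover have "\<forall>p \<le> n. p \<noteq> ?\<tau> (cmov c) \<longrightarrow>
      cst c' (?\<tau> p) = cst c (?\<tau> p) \<and> cinp c' (?\<tau> p) = cinp c (?\<tau> p)"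
    using frame \<tau>_le \<tau>_ne by simp
  ultimately show ?thesis
    using \<tau>_le[OF m] unfolding gstep_def by auto
qed

lemma conj_templates_tinit_in_guard:
  assumes "conj_templates A B" and "(q, \<sigma>, g, q') \<in> tdelta (tmpl A B p)"
  shows "tinit B \<in> g"
  using assms unfolding conj_templates_def tmpl_def by (fastforce split: if_splits)

lemma gstep_park_proc:
  assumes "gstep A B n c c'" and "conj_templates A B"
  shows "gstep A B (Suc n) (park_proc (Suc n) (tinit B) \<sigma> c) (park_proc (Suc n) (tinit B) \<sigma> c')"
proof -
  from assms(1) obtain g where m: "cmov c \<le> n"
    and tr: "(cst c (cmov c), cinp c (cmov c), g, cst c' (cmov c)) \<in> tdelta (tmpl A B (cmov c))"
    and guard: "guard_sat n g (cst c) (cmov c)"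
    and frame: "\<forall>p \<le> n. p \<noteq> cmov c \<longrightarrow> cst c' p = cst c p \<and> cinp c' p = cinp c p"
    unfolding gstep_def enabled_def by auto
  have "tinit B \<in> g"
    using conj_templates_tinit_in_guard[OF assms(2) tr] .
  then have "guard_sat (Suc n) g ((cst c)(Suc n := tinit B)) (cmov c)"
    using guard m unfolding guard_sat_def by (simp add: le_Suc_eq)
  then have "enabled A B (Suc n) ((cst c)(Suc n := tinit B)) ((cinp c)(Suc n := \<sigma>)) (cmov c)
      (cst c (cmov c), cinp c (cmov c), g, cst c' (cmov c))"
    using m tr unfolding enabled_def by simp
  then have "\<exists>g. enabled A B (Suc n) ((cst c)(Suc n := tinit B)) ((cinp c)(Suc n := \<sigma>)) (cmov c)
      (cst c (cmov c), cinp c (cmov c), g, cst c' (cmov c))"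
    by (rule exI)
  moreover have "cmov c \<noteq> Suc n"
    using m by simp
  ultimately show ?thesis
    using m frame unfolding gstep_def by (simp add: le_Suc_eq)
qed

text \<open>In \<open>split_proc i N q \<sigma> b c\<close> the local state of process \<open>i\<close> of \<open>c\<close> is carried by
  process \<open>i\<close> if \<open>\<not> b\<close> and by process \<open>N\<close> if \<open>b\<close>; the other of the two idles in \<open>(q, \<sigma>)\<close>.\<close>

definition split_proc :: "nat \<Rightarrow> nat \<Rightarrow> 'q \<Rightarrow> 's \<Rightarrow> bool \<Rightarrow> ('q, 's) config \<Rightarrow> ('q, 's) config" where
  "split_proc i N q \<sigma> b c = (if b then swap_procs i N else id) (park_proc N q \<sigma> c)"

lemma split_proc_simps:
  assumes "i \<noteq> N"
  shows "cst (split_proc i N q \<sigma> b c) p =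
      (if p = i then (if b then q else cst c i) else if p = N then (if b then cst c i else q) else cst c p)"
    and "cinp (split_proc i N q \<sigma> b c) p =
      (if p = i then (if b then \<sigma> else cinp c i) else if p = N then (if b then cinp c i else \<sigma>) else cinp c p)"
    and "cmov (split_proc i N q \<sigma> b c) = (if b then transpose i N (cmov c) else cmov c)"
  using assms by (simp_all add: split_proc_def transpose_def)

lemma split_proc_handover:
  assumes "cst c i = q" and "cinp c i = \<sigma>"
  shows "cst (split_proc i N q \<sigma> b c) = cst (split_proc i N q \<sigma> b' c)"
    and "cinp (split_proc i N q \<sigma> b c) = cinp (split_proc i N q \<sigma> b' c)"
  using assms by (auto simp: split_proc_def transpose_def fun_eq_iff)

lemma gstep_split_proc:
  assumes "gstep A B n c c'" and "conj_templates A B" and "0 < i" and "i \<le> n"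
    and "b' \<noteq> b \<Longrightarrow> cst c' i = tinit B \<and> cinp c' i = \<sigma>"
  shows "gstep A B (Suc n) (split_proc i (Suc n) (tinit B) \<sigma> b c)
                           (split_proc i (Suc n) (tinit B) \<sigma> b' c')"
proof -
  have parked: "gstep A B (Suc n) (park_proc (Suc n) (tinit B) \<sigma> c) (park_proc (Suc n) (tinit B) \<sigma> c')"
    using gstep_park_proc[OF assms(1,2)] .
  have "tmpl A B i = tmpl A B (Suc n)"
    using assms(3) by (simp add: tmpl_def)
  then have same: "gstep A B (Suc n) (split_proc i (Suc n) (tinit B) \<sigma> b c)
                                     (split_proc i (Suc n) (tinit B) \<sigma> b c')"
    using parked gstep_swap_procs[OF parked, of i "Suc n"] assms(4)
    by (simp add: split_proc_def)
  show ?thesis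
  proof (cases "b' = b")
    case True
    with same show ?thesis by simp
  next
    case False
    with assms(5) have "cst c' i = tinit B" and "cinp c' i = \<sigma>" by auto
    from split_proc_handover[OF this, of "Suc n" b' b] show ?thesis
      by (rule gstep_cong_target[OF same])
  qed
qed

lemma fair_initializing_run_recurrent_input:
  assumes "uncond_fair_run A B n \<rho>" and "initializing A B n \<rho>" and "p \<le> n"
    and "finite (tSig (tmpl A B p))"
  obtains \<sigma> where "\<sigma> \<in> tSig (tmpl A B p)"
    and "infinite {t. cst (\<rho> t) p = tinit (tmpl A B p) \<and> cinp (\<rho> t) p = \<sigma>}"
proof -
  let ?I = "{t. cst (\<rho> t) p = tinit (tmpl A B p)}"
  have "infinite ?I"
    using assms(1-3) unfolding uncond_fair_run_def initializing_def by blast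
  moreover have inputs: "(\<lambda>t. cinp (\<rho> t) p) ` ?I \<subseteq> tSig (tmpl A B p)"
    using assms(1,3) unfolding uncond_fair_run_def inf_run_def by auto
  then have "finite ((\<lambda>t. cinp (\<rho> t) p) ` ?I)"
    using assms(4) finite_subset by blast
  ultimately obtain t0 where "t0 \<in> ?I" and "infinite {t \<in> ?I. cinp (\<rho> t) p = cinp (\<rho> t0) p}"
    using pigeonhole_infinite by blast
  then show ?thesis
    using inputs that[of "cinp (\<rho> t0) p"] by auto
qed

locale process_split =
  fixes A B :: "('q, 's) template" and n i :: nat and \<sigma> :: 's
    and \<rho> :: "nat \<Rightarrow> ('q, 's) config" and par :: "nat \<Rightarrow> bool"
  assumes conj: "conj_templates A B"
    and proc: "0 < i" "i \<le> n"
    and run: "inf_run A B n \<rho>"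
    and input: "\<sigma> \<in> tSig B"
    and handover: "\<And>t. par (Suc t) \<noteq> par t \<Longrightarrow> cst (\<rho> (Suc t)) i = tinit B \<and> cinp (\<rho> (Suc t)) i = \<sigma>"
    and alternation: "\<And>x. infinite {t. cmov (\<rho> t) = i \<and> par t = x}"
begin

definition split_run :: "nat \<Rightarrow> ('q, 's) config" where
  "split_run t = split_proc i (Suc n) (tinit B) \<sigma> (par t) (\<rho> t)"

lemma i_ne_Suc_n: "i \<noteq> Suc n"
  using proc by simp

lemma tmpl_i: "tmpl A B i = B" and tmpl_Suc_n: "tmpl A B (Suc n) = B"
  using proc by (simp_all add: tmpl_def)

lemma cmov_ne_Suc_n: "cmov (\<rho> t) \<noteq> Suc n"
  using run unfolding inf_run_def gstep_def by (metis not_less_eq_eq order_refl)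

lemma cinp_i: "cinp (\<rho> t) i \<in> tSig B"
  using run proc tmpl_i unfolding inf_run_def by metis

lemma inf_run_split_run: "inf_run A B (Suc n) split_run"
  unfolding inf_run_def
proof (intro conjI allI impI)
  fix p assume "p \<le> Suc n"
  then show "cst (split_run 0) p = tinit (tmpl A B p)"
    using run proc tmpl_i tmpl_Suc_n unfolding inf_run_def split_run_def
    by (auto simp: split_proc_simps[OF i_ne_Suc_n] le_Suc_eq)
next
  fix t p assume "p \<le> Suc n"
  then show "cinp (split_run t) p \<in> tSig (tmpl A B p)"
    using run input cinp_i tmpl_i tmpl_Suc_n i_ne_Suc_n unfolding inf_run_def split_run_def
    by (auto simp: split_proc_simps[OF i_ne_Suc_n] le_Suc_eq)
next
  fix t
  show "gstep A B (Suc n) (split_run t) (split_run (Suc t))"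
    unfolding split_run_def
    by (rule gstep_split_proc[OF _ conj proc handover]) (use run in \<open>simp add: inf_run_def\<close>)
qed

lemma moves_split_run:
  assumes "p \<le> Suc n"
  shows "{t. cmov (split_run t) = p} =
    (if p = i then {t. cmov (\<rho> t) = i \<and> par t = False}
     else if p = Suc n then {t. cmov (\<rho> t) = i \<and> par t = True}
     else {t. cmov (\<rho> t) = p})"
  using assms cmov_ne_Suc_n i_ne_Suc_n
  by (auto simp: split_run_def split_proc_simps[OF i_ne_Suc_n] transpose_def)

lemma uncond_fair_split_run:
  assumes "uncond_fair_run A B n \<rho>"
  shows "uncond_fair_run A B (Suc n) split_run"
  using assms alternation[of False] alternation[of True] inf_run_split_run moves_split_run i_ne_Suc_n
  unfolding uncond_fair_run_def by (auto simp: le_Suc_eq)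

lemma initializing_split_run:
  assumes "initializing A B n \<rho>"
  shows "initializing A B (Suc n) split_run"
  unfolding initializing_def
proof (intro allI impI)
  fix p assume p: "p \<le> Suc n" and moves: "infinite {t. cmov (split_run t) = p}"
  show "infinite {t. cst (split_run t) p = tinit (tmpl A B p)}"
  proof (cases "p = i \<or> p = Suc n")
    case True
    then have "{t. cmov (\<rho> t) = i \<and> par t = (p = i)} \<subseteq> {t. cst (split_run t) p = tinit (tmpl A B p)}"
      using tmpl_i tmpl_Suc_n i_ne_Suc_n by (auto simp: split_run_def split_proc_simps[OF i_ne_Suc_n])
    then show ?thesis
      using alternation finite_subset by blast
  next
    case False
    with p have "p \<le> n" by simp
    moreover have "{t. cst (split_run t) p = tinit (tmpl A B p)} = {t. cst (\<rho> t) p = tinit (tmpl A B p)}"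
      using False by (simp add: split_run_def split_proc_simps[OF i_ne_Suc_n])
    ultimately show ?thesis
      using assms moves moves_split_run[OF p] False unfolding initializing_def by auto
  qed
qed

lemma run_label_split_run:
  assumes "i \<noteq> 1"
  shows "run_label split_run = run_label \<rho>"
  using assms proc by (auto simp: run_label_def split_run_def split_proc_simps[OF i_ne_Suc_n])

end

theorem mainTheorem13:
  fixes A B :: "('q, 's) template" and h :: "('q, 's) ap ltlx" and n :: nat
  assumes "conj_templates A B"
    and "\<forall>a \<in> set_ltlx h. ap_ok A B a"
    and "n \<ge> 2"
    and "\<exists>\<rho>. uncond_fair_run A B n \<rho> \<and> initializing A B n \<rho> \<and> run_sat \<rho> h"
  shows "\<exists>\<rho>. uncond_fair_run A B (Suc n) \<rho> \<and> initializing A B (Suc n) \<rho> \<and> run_sat \<rho> h"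
proof -
  obtain \<rho> where fair: "uncond_fair_run A B n \<rho>" and init: "initializing A B n \<rho>"
    and sat: "run_sat \<rho> h"
    using assms(4) by blast
  have tmpl_2: "tmpl A B 2 = B"
    by (simp add: tmpl_def)
  have "finite (tSig B)"
    using assms(1) by (simp add: conj_templates_def template_wf_def)
  then obtain \<sigma> where input: "\<sigma> \<in> tSig B"
    and recurrent: "infinite {t. cst (\<rho> t) 2 = tinit B \<and> cinp (\<rho> t) 2 = \<sigma>}"
    using fair_initializing_run_recurrent_input[OF fair init assms(3)] unfolding tmpl_2 by blast
  moreover have "infinite {t. cmov (\<rho> t) = 2}"
    using fair assms(3) unfolding uncond_fair_run_def by simp
  ultimately obtain par :: "nat \<Rightarrow> bool"
    where "\<And>t. par (Suc t) \<noteq> par t \<Longrightarrow> cst (\<rho> (Suc t)) 2 = tinit B \<and> cinp (\<rho> (Suc t)) 2 = \<sigma>"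
      and "\<And>x. infinite {t. cmov (\<rho> t) = 2 \<and> par t = x}"
    using exists_alternating_parity by blast
  then interpret process_split A B n 2 \<sigma> \<rho> par
    using assms(1,3) fair input unfolding uncond_fair_run_def by unfold_locales auto
  \<comment> \<open>The labels of \<open>A\<close> and \<open>B\<^sub>1\<close> are unchanged.\<close>
  have "run_sat split_run h"
    using sat run_label_split_run unfolding run_sat_def by simp
  then show ?thesis
    using uncond_fair_split_run[OF fair] initializing_split_run[OF init] by blast
qed

end
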